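(* Assume the step size satisfies $$0<\alpha<\min\Big\{\frac{1+\lambda_{\min}(W)}{L_f},\ \frac{2}{L_f+m_f}\Big\}.$$ Consider the inexact DPGM: for a (possibly random) initial point $\mathbf{x}^0\in\mathbb{R}^N$ and $\ell=0,1,2,\dots$, $$\mathbf{y}^{\ell+1} = W\mathbf{x}^\ell - \alpha\nabla f(\mathbf{x}^\ell),\qquad \mathbf{x}^{\ell+1} = \operatorname{prox}_{\alpha g}(\mathbf{y}^{\ell+1}) + \mathbf{e}^\ell,$$ where each $\mathbf{e}^\ell$ is a random vector in $\mathbb{R}^N$ with $\mathbb{E}[\|\mathbf{e}^\ell\|]\le\eta<\infty$. Define $$d^\ell := \big[\|\bar{\mathbf{x}}^\ell - \mathbf{x}^*\|,\ \|\mathbf{x}^\ell-\bar{\mathbf{x}}^\ell\|,\ \|\mathbf{x}^\ell - \tilde{\mathbf{x}}\|\big]^\top,$$ $$A := \begin{bmatrix} c & \alpha L_f & 0\\ 0 & \rho(W) & \alpha L_f\\ 0&0&\zeta_\varphi\end{bmatrix},\qquad b := \begin{bmatrix} 2\alpha L_g\\ 2\alpha L_g + \|(I-W)\tilde{\mathbf{x}}\|\\ 0\end{bmatrix},$$ with $c := \sqrt{1-2\alpha m_f L_f/(m_f+L_f)}$ and $\zeta_\varphi := \max\{|1-L_\varphi|,|1-m_\varphi|\}$, $L_\varphi = 1-\lambda_{\min}(W)+\alpha L_f$, $m_\varphi=\alpha m_f$. Then $c,\rho(W),\zeta_\varphi\in(0,1)$ (so all eigenvalues of $A$ lie strictly inside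 the unit circle), and, whenever the expectations are finite, for all $\ell\ge0$, entrywise, $$\mathbb{E}[d^{\ell+1}] \le A\,\mathbb{E}[d^\ell] + b + \mathbf{1}_3\,\mathbb{E}[\|\mathbf{e}^\ell\|],\qquad \mathbb{E}[\|\mathbf{x}^{\ell+1}-\mathbf{x}^*\|]\le [1\ 1\ 0]\,\mathbb{E}[d^{\ell+1}].$$ In particular the mean error is upper-bounded by the output of an asymptotically stable linear system with bounded input, i.e. the iterates converge R-linearly (in mean) to a neighborhood of $\mathbf{x}^*$.
   Context: $N\ge2$ agents over an undirected connected graph $\mathcal{G}=(\mathcal{V},\mathcal{E})$. $W\in\mathbb{R}^{N\times N}$ is a symmetric doubly stochastic matrix (nonnegative entries, rows and columns summing to $1$) with $w_{ij}=0$ for $i\ne j$, $(i,j)\notin\mathcal{E}$, such that $\rho(W):=\|W-\tfrac1N\mathbf{1}\mathbf{1}^\top\|\in(0,1)$ (spectral norm); $\lambda_{\min}(W)$ is its smallest eigenvalue; $I$ is the identity; $\mathbf{1}_3$ the all-ones vector in $\mathbb{R}^3$. Each $f_i:\mathbb{R}\to\mathbb{R}$ is $L_{f_i}$-smooth and $m_{f_i}$-strongly convex; $f(\mathbf{x})=\sum_i f_i(x_i)$; $L_f=\max_i L_{f_i}$, $m_f=\min_i m_{f_i}$. Each $g_i:\mathbb{R}\to\mathbb{R}$ is closed, convex, proper and Lipschitz; $g(\mathbf{x})=\sum_i g_i(x_i)$; $L_g\ge0$ is a constant such that $g$ is $L_g$-Lipschitz on $\mathbb{R}^N$ (Euclidean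 norm). $x^*$ is the unique minimizer of $\sum_{i}(f_i+g_i)$ over $\mathbb{R}$ and $\mathbf{x}^*=x^*\mathbf{1}$. $\varphi_\alpha(\mathbf{x}) = \tfrac12\mathbf{x}^\top(I-W)\mathbf{x}+\alpha f(\mathbf{x})$ and $\tilde{\mathbf{x}} = \arg\min_{\mathbf{x}\in\mathbb{R}^N}\{\varphi_\alpha(\mathbf{x})+\alpha g(\mathbf{x})\}$. $\bar{\mathbf{x}}^\ell = \tfrac1N\mathbf{1}\mathbf{1}^\top\mathbf{x}^\ell$. $\operatorname{prox}_{\alpha h}(\mathbf{y}) = \arg\min_{\mathbf{x}}\{h(\mathbf{x})+\tfrac{1}{2\alpha}\|\mathbf{x}-\mathbf{y}\|^2\}$. Vector inequalities are entrywise. *)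

theory Defs
  imports "HOL-Analysis.Analysis" "HOL-Probability.Probability"
begin

definition lambda_min :: "real^'n^'n \<Rightarrow> real" where
  "lambda_min W = Min {l. \<exists>v::real^'n. v \<noteq> 0 \<and> W *v v = l *s v}"

definition avg :: "real^'n \<Rightarrow> real^'n" where
  "avg x = (\<chi> i. (\<Sum>j\<in>UNIV. x $ j) / real CARD('n))"

definition Jmat :: "real^'n^'n" where
  "Jmat = (\<chi> i j. 1 / real CARD('n))"

definition rho :: "real^'n^'n \<Rightarrow> real" where
  "rho W = onorm (\<lambda>x. (W - Jmat) *v x)"

definition sepsum :: "('n \<Rightarrow> real \<Rightarrow> real) \<Rightarrow> real^'n \<Rightarrow> real" where
  "sepsum h x = (\<Sum>i\<in>UNIV. h i (x $ i))"

definition grad :: "('n \<Rightarrow> real \<Rightarrow> real) \<Rightarrow> real^'n \<Rightarrow> real^'n" where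
  "grad f x = (\<chi> i. deriv (f i) (x $ i))"

definition prox :: "real \<Rightarrow> (real^'n \<Rightarrow> real) \<Rightarrow> real^'n \<Rightarrow> real^'n" where
  "prox a h y = (THE x. \<forall>z. h x + (norm (x - y))^2 / (2*a) \<le> h z + (norm (z - y))^2 / (2*a))"

definition smooth_fun :: "real \<Rightarrow> (real \<Rightarrow> real) \<Rightarrow> bool" where
  "smooth_fun L h \<longleftrightarrow> (\<forall>x. h differentiable (at x)) \<and>
     (\<forall>x y. \<bar>deriv h x - deriv h y\<bar> \<le> L * \<bar>x - y\<bar>)"

definition strongly_convex_fun :: "real \<Rightarrow> (real \<Rightarrow> real) \<Rightarrow> bool" where
  "strongly_convex_fun m h \<longleftrightarrow> m > 0 \<and> convex_on UNIV (\<lambda>x. h x - m / 2 * x^2)"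

definition doubly_stochastic_sym :: "real^'n^'n \<Rightarrow> bool" where
  "doubly_stochastic_sym W \<longleftrightarrow> transpose W = W \<and> (\<forall>i j. W $ i $ j \<ge> 0) \<and>
     (\<forall>i. (\<Sum>j\<in>UNIV. W $ i $ j) = 1) \<and> (\<forall>j. (\<Sum>i\<in>UNIV. W $ i $ j) = 1)"

end

theory Submission
  imports Defs
begin

text \<open>
  Since W is doubly stochastic, averaging removes it, so the mean of the
  iterate performs a gradient step on the sum of the f_i; every difference quotient of f_i' lies
  in [m_f, L_f], which gives the factor c. The proximal step moves a point by at most
  alpha L_g, and the optimality of x* bounds the sum of the f_i'(x*) by L_g sqrt N. The
  disagreement x - mean x is contracted by W - 11^T/N, i.e. by rho(W). Finally, the minimiser
  x~ of the penalised problem is a fixed point of the proximal gradient map, the proximal map is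
  nonexpansive, and W - alpha D, with D the diagonal of difference quotients of the f_i', is
  symmetric with spectrum in [lambda_min(W) - alpha L_f, 1 - alpha m_f], so its norm is at most
  zeta. Expectation is monotone and linear, which turns the pointwise bounds into the stated ones.
\<close>

lemma nonneg_if_nonneg_add_small_multiple:
  fixes a b :: real
  assumes "\<And>t. 0 < t \<Longrightarrow> t \<le> 1 \<Longrightarrow> 0 \<le> a + t * b"
  shows "0 \<le> a"
proof -
  have "((\<lambda>t. a + t * b) \<longlongrightarrow> a + 0 * b) (at_right 0)"
    by (intro tendsto_intros)
  moreover have "\<forall>\<^sub>F t in at_right 0. 0 \<le> a + t * b"
    using eventually_at_right_real[of 0 1] by (rule eventually_mono) (use assms in auto)
  ultimately show ?thesis
    using tendsto_lowerbound trivial_limit_at_right_real by fastforce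
qed

lemma power2_norm_add_scaleR:
  fixes u v :: "'a::real_inner"
  shows "(norm (u + t *\<^sub>R v))^2 = (norm u)^2 + 2 * t * (u \<bullet> v) + t^2 * (norm v)^2"
  unfolding power2_norm_eq_inner
  by (simp add: inner_add_left inner_add_right inner_commute[of v u] power2_eq_square algebra_simps)

lemma norm_triangle_ineq5:
  fixes a :: "'a::real_normed_vector"
  shows "norm (a + b + c + d + e) \<le> norm a + norm b + norm c + norm d + norm e"
  using norm_triangle_ineq[of "a + b + c + d" e] norm_triangle_ineq[of "a + b + c" d]
    norm_triangle_ineq[of "a + b" c] norm_triangle_ineq[of a b] by linarith

subsection \<open>Smooth and strongly convex scalar functions\<close>

lemma smooth_fun_has_real_derivative:
  "smooth_fun L h \<Longrightarrow> (h has_real_derivative deriv h x) (at x)"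
  unfolding smooth_fun_def using DERIV_deriv_iff_real_differentiable by blast

lemma smooth_fun_deriv_lipschitz:
  "smooth_fun L h \<Longrightarrow> \<bar>deriv h a - deriv h b\<bar> \<le> L * \<bar>a - b\<bar>"
  unfolding smooth_fun_def by blast

lemma smooth_fun_const_nonneg: "smooth_fun L h \<Longrightarrow> 0 \<le> L"
  using smooth_fun_deriv_lipschitz[of L h 1 0] by simp

lemma smooth_fun_descent:
  assumes "smooth_fun L h"
  shows "h (a + t) \<le> h a + deriv h a * t + L * t^2"
proof -
  have D: "\<forall>x. DERIV h x :> deriv h x" using smooth_fun_has_real_derivative[OF assms] by blast
  have L0: "0 \<le> L" by (rule smooth_fun_const_nonneg[OF assms])
  consider "t = 0" | "t > 0" | "t < 0" by linarith
  then show ?thesis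
  proof cases
    case 1 then show ?thesis by simp
  next
    case 2
    obtain z where z: "a < z" "z < a + t" "h (a + t) - h a = (a + t - a) * deriv h z"
      using MVT2[of a "a+t" h "deriv h"] 2 D by auto
    have "\<bar>deriv h z - deriv h a\<bar> \<le> L * \<bar>z - a\<bar>" by (rule smooth_fun_deriv_lipschitz[OF assms])
    also have "\<dots> \<le> L * t" using z L0 by (intro mult_left_mono) auto
    finally have "t * (deriv h z - deriv h a) \<le> t * (L * t)" using 2 by (simp add: mult_left_mono)
    then show ?thesis using z by (simp add: power2_eq_square algebra_simps)
  next
    case 3
    obtain z where z: "a + t < z" "z < a" "h a - h (a + t) = (a - (a + t)) * deriv h z"
      using MVT2[of "a+t" a h "deriv h"] 3 D by auto
    have "\<bar>deriv h z - deriv h a\<bar> \<le> L * \<bar>z - a\<bar>" by (rule smooth_fun_deriv_lipschitz[OF assms])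
    also have "\<dots> \<le> L * (-t)" using z L0 by (intro mult_left_mono) auto
    finally have "(-t) * (deriv h a - deriv h z) \<le> (-t) * (L * (-t))" using 3 by (intro mult_left_mono) auto
    then show ?thesis using z by (simp add: power2_eq_square algebra_simps)
  qed
qed

lemma strongly_convex_deriv_monotone:
  assumes "smooth_fun L h" "strongly_convex_fun m h"
  shows "m * (a - b)^2 \<le> (deriv h a - deriv h b) * (a - b)"
proof -
  define k where "k x = h x - m / 2 * x^2" for x
  have cv: "convex_on UNIV k" using assms(2) unfolding strongly_convex_fun_def k_def by simp
  have dk: "(k has_real_derivative (deriv h c - m * c)) (at c within UNIV)" for c
    unfolding k_def
    by (rule derivative_eq_intros smooth_fun_has_real_derivative[OF assms(1)] | simp)+
  have "k a - k b \<ge> (deriv h b - m * b) * (a - b)"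
    by (rule convex_on_imp_above_tangent[OF cv]) (auto intro: dk)
  moreover have "k b - k a \<ge> (deriv h a - m * a) * (b - a)"
    by (rule convex_on_imp_above_tangent[OF cv]) (auto intro: dk)
  ultimately show ?thesis unfolding k_def power2_eq_square by (simp add: algebra_simps)
qed

lemma deriv_difference_quotient_bounds:
  assumes "smooth_fun L h" "strongly_convex_fun m h" "a \<noteq> b"
  shows "m \<le> (deriv h a - deriv h b) / (a - b)" "(deriv h a - deriv h b) / (a - b) \<le> L"
proof -
  define q where "q = (deriv h a - deriv h b) / (a - b)"
  have qe: "deriv h a - deriv h b = q * (a - b)" using assms(3) by (simp add: q_def)
  have "m * (a - b)^2 \<le> q * (a - b)^2"
    using strongly_convex_deriv_monotone[OF assms(1,2), of a b] qe by (simp add: power2_eq_square)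
  then show "m \<le> q" using assms(3) by simp
  have "\<bar>q\<bar> * \<bar>a - b\<bar> \<le> L * \<bar>a - b\<bar>"
    using smooth_fun_deriv_lipschitz[OF assms(1), of a b] qe by (simp add: abs_mult)
  then show "q \<le> L" using assms(3) by simp
qed

lemma gradient_step_factor_sq_le:
  fixes m L s a :: real
  assumes "0 < m" "m \<le> s" "s \<le> L" "0 < a" "a < 2 / (L + m)"
  shows "(1 - a * s)^2 \<le> 1 - 2 * a * m * L / (m + L)"
proof -
  have mL: "0 < m + L" using assms(1-3) by linarith
  define \<beta> where "\<beta> = a * (m + L)"
  have \<beta>: "0 \<le> \<beta>" "\<beta> < 2"
    using assms(4,5) mL by (simp add: \<beta>_def, simp add: \<beta>_def field_simps)
  have "(m + L) * m \<le> (m + L) * s" using assms(2) mL by (simp add: mult_left_mono)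
  then have "(m + L) * s - m * L \<ge> m * m" by (simp add: algebra_simps)
  then have "(2 - \<beta>) * ((m + L) * s - m * L) \<ge> 0"
    using zero_le_square[of m] \<beta> by (intro mult_nonneg_nonneg) linarith+
  moreover have "\<beta> * ((s - m) * (s - L)) \<le> 0"
    using assms(2,3) \<beta> by (simp add: mult_nonneg_nonpos mult_nonneg_nonpos2)
  moreover have "(1 - a * s)^2 * (m + L) - ((m + L) - 2 * a * m * L)
      = a * (\<beta> * ((s - m) * (s - L)) - (2 - \<beta>) * ((m + L) * s - m * L))"
    by (simp add: \<beta>_def power2_eq_square algebra_simps)
  ultimately have "(1 - a * s)^2 * (m + L) \<le> (m + L) - 2 * a * m * L"
    using assms(4) by (smt (verit) mult_nonneg_nonpos)
  then show ?thesis using mL by (simp add: field_simps)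
qed

subsection \<open>The proximal operator of a convex Lipschitz function\<close>

locale convex_lipschitz_prox =
  fixes G :: "real^'n::finite \<Rightarrow> real" and K a :: real
  assumes convex: "convex_on UNIV G"
    and lipschitz: "\<And>u v. \<bar>G u - G v\<bar> \<le> K * norm (u - v)"
    and K_nonneg: "0 \<le> K" and a_pos: "0 < a"
begin

definition prox_objective :: "real^'n \<Rightarrow> real^'n \<Rightarrow> real" where
  "prox_objective y z = G z + (norm (z - y))^2 / (2*a)"

lemma prox_objective_min_imp_optimality:
  assumes min: "\<forall>z. prox_objective y p \<le> prox_objective y z"
  shows "G p + ((y - p) \<bullet> (z - p)) / a \<le> G z"
proof -
  have "0 \<le> (G z - G p + ((p - y) \<bullet> (z - p)) / a) + t * ((norm (z - p))^2 / (2*a))"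
    if t: "0 < t" "t \<le> 1" for t
  proof -
    let ?zt = "p + t *\<^sub>R (z - p)"
    define A where "A = (norm (p - y))^2 / (2*a)"
    define B where "B = (2 * t * ((p - y) \<bullet> (z - p)) + t^2 * (norm (z - p))^2) / (2*a)"
    have "?zt = (1 - t) *\<^sub>R p + t *\<^sub>R z" by (simp add: algebra_simps)
    then have "G ?zt \<le> (1 - t) * G p + t * G z"
      using convex_onD[OF convex, of t p z] t by simp
    moreover have "prox_objective y p \<le> prox_objective y ?zt" using min by blast
    moreover have zt: "?zt - y = (p - y) + t *\<^sub>R (z - p)" by (simp add: algebra_simps)
    then have "prox_objective y ?zt = G ?zt + A + B"
      unfolding prox_objective_def zt power2_norm_add_scaleR A_def B_def by (simp add: add_divide_distrib)
    ultimately have "0 \<le> t * (G z - G p) + B"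
      unfolding prox_objective_def A_def by (simp add: algebra_simps)
    then have "0 \<le> t * (G z - G p) + (2 * t * ((p - y) \<bullet> (z - p)) + t^2 * (norm (z - p))^2) / (2*a)"
      by (simp add: B_def)
    also have "\<dots> = t * ((G z - G p + ((p - y) \<bullet> (z - p)) / a) + t * ((norm (z - p))^2 / (2*a)))"
      using a_pos by (simp add: field_simps power2_eq_square)
    finally show ?thesis using t by (simp add: zero_le_mult_iff)
  qed
  then have "0 \<le> G z - G p + ((p - y) \<bullet> (z - p)) / a"
    by (rule nonneg_if_nonneg_add_small_multiple)
  moreover have "(p - y) \<bullet> (z - p) = - ((y - p) \<bullet> (z - p))" by (simp add: inner_diff_left)
  ultimately show ?thesis by (simp add: field_simps)
qed

lemma prox_objective_growth:
  assumes opt: "\<forall>z. G p + ((y - p) \<bullet> (z - p)) / a \<le> G z"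
  shows "prox_objective y p + (norm (z - p))^2 / (2*a) \<le> prox_objective y z"
proof -
  have "z - y = (p - y) + 1 *\<^sub>R (z - p)" by simp
  then have "(norm (z - y))^2 = (norm (p - y))^2 + 2 * ((p - y) \<bullet> (z - p)) + (norm (z - p))^2"
    by (metis power2_norm_add_scaleR mult_1 mult.right_neutral one_power2)
  then have "prox_objective y z
      = G z + (norm (p - y))^2 / (2*a) + ((p - y) \<bullet> (z - p)) / a + (norm (z - p))^2 / (2*a)"
    unfolding prox_objective_def using a_pos by (simp add: field_simps)
  moreover have "(p - y) \<bullet> (z - p) = - ((y - p) \<bullet> (z - p))" by (simp add: inner_diff_left)
  ultimately show ?thesis
    using opt[rule_format, of z] unfolding prox_objective_def by simp
qed

lemma prox_objective_has_min: "\<exists>p. \<forall>z. prox_objective y p \<le> prox_objective y z"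
proof -
  define R where "R = 2 * a * K + 1"
  have R0: "0 \<le> R" using a_pos K_nonneg by (simp add: R_def)
  have "K-lipschitz_on UNIV G" using lipschitz K_nonneg by (auto simp: lipschitz_on_def dist_norm)
  then have "continuous_on (cball y R) G" using lipschitz_on_continuous_on continuous_on_subset by blast
  then have "continuous_on (cball y R) (prox_objective y)"
    unfolding prox_objective_def using a_pos by (intro continuous_intros) auto
  then obtain p where p: "p \<in> cball y R" "\<forall>z\<in>cball y R. prox_objective y p \<le> prox_objective y z"
    using continuous_attains_inf[OF compact_cball] R0 by (metis cball_eq_empty not_less)
  have "prox_objective y p \<le> prox_objective y z" for z
  proof (cases "z \<in> cball y R")
    case False
    \<comment> \<open>outside the ball the quadratic term beats the linear decrease of \<open>G\<close>\<close>
    then have d: "norm (z - y) > R" by (simp add: dist_norm norm_minus_commute)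
    have "G y - K * norm (z - y) \<le> G z" using lipschitz[of z y] by linarith
    moreover have "norm (z - y) / (2*a) > K"
      using d a_pos by (simp add: R_def field_simps)
    then have "norm (z - y) * (norm (z - y) / (2*a) - K) > 0" using d R0 by (intro mult_pos_pos) auto
    ultimately have "prox_objective y y < prox_objective y z"
      unfolding prox_objective_def by (simp add: power2_eq_square field_simps)
    moreover have "prox_objective y p \<le> prox_objective y y" using p R0 by auto
    ultimately show ?thesis by linarith
  qed (use p in blast)
  then show ?thesis by blast
qed

lemma prox_eqI:
  assumes "\<forall>z. G p + ((y - p) \<bullet> (z - p)) / a \<le> G z"
  shows "prox a G y = p"
  unfolding prox_def
proof (rule the_equality)
  show "\<forall>z. G p + (norm (p - y))\<^sup>2 / (2 * a) \<le> G z + (norm (z - y))\<^sup>2 / (2 * a)"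
    using prox_objective_growth[OF assms] a_pos unfolding prox_objective_def
    by (smt (verit) divide_nonneg_pos zero_le_power2)
next
  fix q assume "\<forall>z. G q + (norm (q - y))\<^sup>2 / (2 * a) \<le> G z + (norm (z - y))\<^sup>2 / (2 * a)"
  then have "prox_objective y q \<le> prox_objective y p" unfolding prox_objective_def by blast
  with prox_objective_growth[OF assms, of q] have "(norm (q - p))^2 / (2*a) \<le> 0" by linarith
  then show "q = p" using a_pos by (simp add: divide_le_0_iff)
qed

lemma prox_optimality: "G (prox a G y) + ((y - prox a G y) \<bullet> (z - prox a G y)) / a \<le> G z"
proof -
  obtain p where "\<forall>z. prox_objective y p \<le> prox_objective y z" using prox_objective_has_min by blast
  then have "\<forall>z. G p + ((y - p) \<bullet> (z - p)) / a \<le> G z"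
    using prox_objective_min_imp_optimality by blast
  then show ?thesis using prox_eqI by simp
qed

lemma prox_nonexpansive: "norm (prox a G y1 - prox a G y2) \<le> norm (y1 - y2)"
proof -
  let ?p1 = "prox a G y1" and ?p2 = "prox a G y2"
  have "0 \<le> - ((y1 - ?p1) \<bullet> (?p2 - ?p1)) / a - ((y2 - ?p2) \<bullet> (?p1 - ?p2)) / a"
    using prox_optimality[of y1 ?p2] prox_optimality[of y2 ?p1] by linarith
  then have "0 \<le> - ((y1 - ?p1) \<bullet> (?p2 - ?p1)) - ((y2 - ?p2) \<bullet> (?p1 - ?p2))"
    using a_pos by (simp add: field_simps)
  then have "(?p1 - ?p2) \<bullet> (?p1 - ?p2) \<le> (y1 - y2) \<bullet> (?p1 - ?p2)"
    by (simp add: inner_diff_left inner_diff_right inner_commute algebra_simps)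
  also have "\<dots> \<le> norm (y1 - y2) * norm (?p1 - ?p2)" by (rule norm_cauchy_schwarz)
  finally have "norm (?p1 - ?p2) * norm (?p1 - ?p2) \<le> norm (y1 - y2) * norm (?p1 - ?p2)"
    by (simp add: dot_square_norm power2_eq_square)
  then show ?thesis
    by (metis mult_right_le_imp_le norm_ge_zero order.order_iff_strict mult_zero_right zero_less_norm_iff norm_zero)
qed

lemma prox_dist_le: "norm (prox a G y - y) \<le> a * K"
proof -
  let ?p = "prox a G y"
  have "(norm (y - ?p))^2 / a \<le> G y - G ?p"
    using prox_optimality[of y y] by (simp add: power2_norm_eq_inner)
  also have "\<dots> \<le> K * norm (y - ?p)" using lipschitz[of y ?p] by linarith
  finally have "norm (y - ?p) * norm (y - ?p) \<le> (a * K) * norm (y - ?p)"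
    using a_pos by (simp add: field_simps power2_eq_square)
  then have "norm (y - ?p) \<le> a * K"
    by (metis mult_right_le_imp_le norm_ge_zero order.order_iff_strict zero_less_norm_iff
        norm_zero mult_nonneg_nonneg a_pos K_nonneg less_imp_le)
  then show ?thesis by (simp add: norm_minus_commute)
qed

end

subsection \<open>Averaging and doubly stochastic matrices\<close>

lemma avg_const: "avg (\<chi> i. c :: real^'n::finite) = (\<chi> i. c)"
  by (simp add: vec_eq_iff avg_def)

lemma avg_add: "avg (x + y) = avg x + avg y" for x y :: "real^'n::finite"
  by (simp add: vec_eq_iff avg_def sum.distrib add_divide_distrib)

lemma avg_diff: "avg (x - y) = avg x - avg y" for x y :: "real^'n::finite"
  by (simp add: vec_eq_iff avg_def sum_subtractf diff_divide_distrib)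

lemma avg_scaleR: "avg (c *\<^sub>R x) = c *\<^sub>R avg x" for x :: "real^'n::finite"
  by (simp add: vec_eq_iff avg_def sum_distrib_left[symmetric])

lemma avg_idem: "avg (avg x) = avg x" for x :: "real^'n::finite"
  by (subst (2) avg_def) (simp add: avg_def[of x] avg_const)

lemma inner_avg_diff_avg: "avg v \<bullet> (v - avg v) = 0" for v :: "real^'n::finite"
proof -
  have "avg v \<bullet> v = (\<Sum>j\<in>UNIV. v $ j)^2 / real CARD('n)"
    by (simp add: inner_vec_def avg_def sum_divide_distrib[symmetric] sum_distrib_left[symmetric] power2_eq_square)
  moreover have "avg v \<bullet> avg v = (\<Sum>j\<in>UNIV. v $ j)^2 / real CARD('n)"
    by (simp add: inner_vec_def avg_def power2_eq_square)
  ultimately show ?thesis by (simp add: inner_diff_right)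
qed

lemma power2_norm_avg_split: "(norm v)^2 = (norm (avg v))^2 + (norm (v - avg v))^2"
  for v :: "real^'n::finite"
  using power2_norm_add_scaleR[of "avg v" 1 "v - avg v"] by (simp add: inner_avg_diff_avg)

lemma norm_avg_le: "norm (avg v) \<le> norm v" for v :: "real^'n::finite"
  by (rule power2_le_imp_le) (use power2_norm_avg_split[of v] in auto)

lemma norm_diff_avg_le: "norm (v - avg v) \<le> norm v" for v :: "real^'n::finite"
  by (rule power2_le_imp_le) (use power2_norm_avg_split[of v] in auto)

lemma norm_const_vec: "norm (\<chi> i. c :: real^'n::finite) = sqrt (real CARD('n)) * \<bar>c\<bar>"
proof -
  have "(norm (\<chi> i. c :: real^'n))^2 = real CARD('n) * c^2"
    unfolding power2_norm_eq_inner inner_vec_def by (simp add: power2_eq_square)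
  then show ?thesis by (metis norm_ge_zero real_sqrt_abs real_sqrt_mult real_sqrt_unique)
qed

lemma norm_le_if_componentwise_le:
  fixes u v :: "real^'n::finite"
  assumes "\<And>i. \<bar>u $ i\<bar> \<le> K * \<bar>v $ i\<bar>" "0 \<le> K"
  shows "norm u \<le> K * norm v"
proof -
  have "u \<bullet> u \<le> (K *\<^sub>R v) \<bullet> (K *\<^sub>R v)"
    unfolding inner_vec_def
  proof (intro sum_mono)
    fix i
    have "\<bar>u $ i\<bar> * \<bar>u $ i\<bar> \<le> (K * \<bar>v $ i\<bar>) * (K * \<bar>v $ i\<bar>)"
      using assms(1)[of i] by (intro mult_mono) auto
    then show "u $ i \<bullet> u $ i \<le> (K *\<^sub>R v) $ i \<bullet> (K *\<^sub>R v) $ i" by (simp add: abs_mult_self_eq algebra_simps)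
  qed
  then have "norm u \<le> norm (K *\<^sub>R v)" by (simp only: norm_le)
  then show ?thesis using assms(2) by simp
qed

lemma Jmat_mult_eq_avg: "Jmat *v x = avg x" for x :: "real^'n::finite"
  by (simp add: vec_eq_iff Jmat_def avg_def matrix_vector_mult_def sum_divide_distrib)

lemma rho_norm_bound: "norm ((W - Jmat) *v v) \<le> rho W * norm v" for W :: "real^'n::finite^'n"
  unfolding rho_def by (rule onorm) simp

context
  fixes W :: "real^'n::finite^'n"
  assumes ds: "doubly_stochastic_sym W"
begin

lemma doubly_stochastic_sym_transpose: "transpose W = W"
  using ds by (simp add: doubly_stochastic_sym_def)

lemma doubly_stochastic_sym_mult_const: "W *v (\<chi> i. c) = (\<chi> i. c)"
  using ds by (simp add: vec_eq_iff matrix_vector_mult_def doubly_stochastic_sym_def sum_distrib_right[symmetric])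

lemma doubly_stochastic_sym_mult_avg: "W *v avg x = avg x"
  unfolding avg_def by (rule doubly_stochastic_sym_mult_const)

lemma avg_doubly_stochastic_sym_mult: "avg (W *v x) = avg x"
proof -
  have "(\<Sum>i\<in>UNIV. (W *v x) $ i) = (\<Sum>i\<in>UNIV. \<Sum>j\<in>UNIV. W $ i $ j * x $ j)"
    by (simp add: matrix_vector_mult_def)
  also have "\<dots> = (\<Sum>j\<in>UNIV. \<Sum>i\<in>UNIV. W $ i $ j * x $ j)" by (rule sum.swap)
  also have "\<dots> = (\<Sum>j\<in>UNIV. x $ j)"
    using ds by (simp add: sum_distrib_right[symmetric] doubly_stochastic_sym_def)
  finally show ?thesis by (simp add: avg_def)
qed

lemma doubly_stochastic_sym_mult_disagreement: "(W - Jmat) *v (x - avg x) = W *v x - avg x"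
  by (simp add: matrix_vector_mult_diff_rdistrib matrix_vector_mult_diff_distrib Jmat_mult_eq_avg
      doubly_stochastic_sym_mult_avg avg_idem avg_diff)

lemma doubly_stochastic_sym_quadratic_form_le: "v \<bullet> (W *v v) \<le> v \<bullet> v"
proof -
  have w0: "W $ i $ j \<ge> 0" for i j using ds by (simp add: doubly_stochastic_sym_def)
  have row: "(\<Sum>j\<in>UNIV. W $ i $ j) = 1" and col: "(\<Sum>i\<in>UNIV. W $ i $ j) = 1" for i j
    using ds by (simp_all add: doubly_stochastic_sym_def)
  have "v \<bullet> (W *v v) = (\<Sum>i\<in>UNIV. \<Sum>j\<in>UNIV. W $ i $ j * (v $ i * v $ j))"
    unfolding inner_vec_def matrix_vector_mult_def
    by (simp add: sum_distrib_left mult.commute mult.left_commute)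
  also have "\<dots> \<le> (\<Sum>i\<in>UNIV. \<Sum>j\<in>UNIV. W $ i $ j * (v $ i)^2 / 2 + W $ i $ j * (v $ j)^2 / 2)"
  proof (intro sum_mono)
    fix i j
    have "W $ i $ j * (2 * (v $ i * v $ j)) \<le> W $ i $ j * ((v $ i)^2 + (v $ j)^2)"
      using sum_squares_bound[of "v $ i" "v $ j"] w0[of i j]
      by (intro mult_left_mono) (simp_all add: power2_eq_square)
    then show "W $ i $ j * (v $ i * v $ j) \<le> W $ i $ j * (v $ i)^2 / 2 + W $ i $ j * (v $ j)^2 / 2"
      by (simp add: algebra_simps)
  qed
  also have "\<dots> = (\<Sum>i\<in>UNIV. \<Sum>j\<in>UNIV. W $ i $ j * (v $ i)^2) / 2
      + (\<Sum>i\<in>UNIV. \<Sum>j\<in>UNIV. W $ i $ j * (v $ j)^2) / 2"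
    by (simp only: sum.distrib sum_divide_distrib)
  also have "(\<Sum>i\<in>UNIV. \<Sum>j\<in>UNIV. W $ i $ j * (v $ j)^2) = (\<Sum>j\<in>UNIV. \<Sum>i\<in>UNIV. W $ i $ j * (v $ j)^2)"
    by (rule sum.swap)
  also have "\<dots> = (\<Sum>j\<in>UNIV. (v $ j)^2)"
    by (simp add: sum_distrib_right[symmetric] col)
  also have "(\<Sum>i\<in>UNIV. \<Sum>j\<in>UNIV. W $ i $ j * (v $ i)^2) = (\<Sum>i\<in>UNIV. (v $ i)^2)"
    by (simp add: sum_distrib_right[symmetric] row)
  finally show ?thesis by (simp add: inner_vec_def power2_eq_square)
qed

end

subsection \<open>Symmetric matrices\<close>

lemma symmetric_inner_mult: "transpose S = S \<Longrightarrow> u \<bullet> (S *v v) = (S *v u) \<bullet> v"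
  for S :: "real^'n::finite^'n"
  by (metis dot_lmul_matrix transpose_matrix_vector)

lemma symmetric_norm_mult_le_if_quadratic_form_le:
  fixes S :: "real^'n::finite^'n"
  assumes sym: "transpose S = S" and q: "\<And>w. \<bar>w \<bullet> (S *v w)\<bar> \<le> M * (w \<bullet> w)"
  shows "norm (S *v v) \<le> M * norm v"
proof (cases "S *v v = 0")
  case True
  have "0 \<le> M * norm v * norm v" using q[of v] by (simp add: dot_square_norm power2_eq_square)
  then show ?thesis using True by (auto simp: zero_le_mult_iff)
next
  case False
  then have v0: "v \<noteq> 0" by auto
  \<comment> \<open>polarisation: \<open>4 u \<bullet> S w = q (u + w) - q (u - w)\<close>, applied to \<open>u = t Sv\<close> with \<open>\<parallel>u\<parallel> = \<parallel>v\<parallel>\<close>\<close>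
  have pol: "4 * (u \<bullet> (S *v w)) \<le> 2 * M * (u \<bullet> u + w \<bullet> w)" for u w
  proof -
    have "(u + w) \<bullet> (S *v (u + w)) \<le> M * ((u + w) \<bullet> (u + w))" using q[of "u + w"] by linarith
    moreover have "-((u - w) \<bullet> (S *v (u - w))) \<le> M * ((u - w) \<bullet> (u - w))" using q[of "u - w"] by linarith
    moreover have "w \<bullet> (S *v u) = u \<bullet> (S *v w)" using symmetric_inner_mult[OF sym, of w u] by (simp add: inner_commute)
    moreover have "(u + w) \<bullet> (S *v (u + w)) - (u - w) \<bullet> (S *v (u - w)) = 2 * (u \<bullet> (S *v w)) + 2 * (w \<bullet> (S *v u))"
      by (simp add: matrix_vector_right_distrib matrix_vector_mult_diff_distrib inner_add_left inner_add_right
          inner_diff_left inner_diff_right)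
    moreover have "(u + w) \<bullet> (u + w) + (u - w) \<bullet> (u - w) = 2 * (u \<bullet> u + w \<bullet> w)"
      by (simp add: inner_add_left inner_add_right inner_diff_left inner_diff_right inner_commute)
    ultimately show ?thesis by (simp add: algebra_simps)
  qed
  define t where "t = norm v / norm (S *v v)"
  have "4 * ((t *\<^sub>R (S *v v)) \<bullet> (S *v v)) \<le> 2 * M * ((t *\<^sub>R (S *v v)) \<bullet> (t *\<^sub>R (S *v v)) + v \<bullet> v)"
    by (rule pol)
  moreover have "(t *\<^sub>R (S *v v)) \<bullet> (S *v v) = norm v * norm (S *v v)"
    using False by (simp add: t_def dot_square_norm power2_eq_square)
  moreover have "(t *\<^sub>R (S *v v)) \<bullet> (t *\<^sub>R (S *v v)) = t^2 * (norm (S *v v))^2"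
    by (simp add: dot_square_norm power2_eq_square)
  moreover have "t^2 * (norm (S *v v))^2 = (norm v)^2" using False by (simp add: t_def power_divide)
  ultimately have "4 * (norm v * norm (S *v v)) \<le> 2 * M * (2 * (norm v)^2)"
    by (metis dot_square_norm mult_2)
  then have "norm v * norm (S *v v) \<le> norm v * (M * norm v)" by (simp add: power2_eq_square algebra_simps)
  then show ?thesis using v0 by simp
qed

lemma symmetric_quadratic_form_minimizer_eigenvector:
  fixes S :: "real^'n::finite^'n"
  assumes sym: "transpose S = S" and lb: "\<And>v. \<mu> * (v \<bullet> v) \<le> v \<bullet> (S *v v)"
    and eq: "u \<bullet> (S *v u) = \<mu> * (u \<bullet> u)"
  shows "S *v u = \<mu> *\<^sub>R u"
proof -
  define Q where "Q v = v \<bullet> (S *v v) - \<mu> * (v \<bullet> v)" for v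
  define r where "r = S *v u - \<mu> *\<^sub>R u"
  have expand: "Q (u - t *\<^sub>R r) = t * (- 2 * (r \<bullet> r) + t * Q r)" for t
  proof -
    have "r \<bullet> (S *v u) = u \<bullet> (S *v r)" using symmetric_inner_mult[OF sym, of u r] by (simp add: inner_commute)
    moreover have "r \<bullet> (S *v u) - \<mu> * (r \<bullet> u) = r \<bullet> r" by (simp add: r_def inner_diff_right)
    ultimately show ?thesis using eq unfolding Q_def
      by (simp add: matrix_vector_mult_diff_distrib matrix_vector_mult_scaleR inner_diff_left
          inner_diff_right inner_commute algebra_simps)
  qed
  have "0 \<le> - 2 * (r \<bullet> r) + t * Q r" if "0 < t" for t
  proof -
    have "0 \<le> Q (u - t *\<^sub>R r)" using lb[of "u - t *\<^sub>R r"] unfolding Q_def by linarith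
    then show ?thesis using that unfolding expand by (simp add: zero_le_mult_iff)
  qed
  then have "0 \<le> - 2 * (r \<bullet> r)" by (rule nonneg_if_nonneg_add_small_multiple) auto
  then have "r = 0" using inner_ge_zero[of r] by simp
  then show ?thesis by (simp add: r_def)
qed

lemma symmetric_min_eigenpair:
  fixes S :: "real^'n::finite^'n"
  assumes sym: "transpose S = S"
  obtains u \<mu> where "u \<noteq> 0" "S *v u = \<mu> *\<^sub>R u" "\<And>v. \<mu> * (v \<bullet> v) \<le> v \<bullet> (S *v v)"
proof -
  let ?q = "\<lambda>v. v \<bullet> (S *v v)"
  have "continuous_on UNIV (\<lambda>v. S *v v)" by (rule linear_continuous_on) simp
  then have "continuous_on UNIV ?q" by (intro continuous_on_inner continuous_on_id)
  then have cont: "continuous_on (sphere 0 1) ?q" by (rule continuous_on_subset) simp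
  obtain u where u: "u \<in> sphere (0::real^'n) 1" "\<forall>y\<in>sphere 0 1. ?q u \<le> ?q y"
    using continuous_attains_inf[OF compact_sphere _ cont] by auto
  have uu: "u \<bullet> u = 1" using u(1) by (simp add: dot_square_norm)
  have lb: "?q u * (v \<bullet> v) \<le> ?q v" for v
  proof (cases "v = 0")
    case False
    let ?w = "(1 / norm v) *\<^sub>R v"
    have "?w \<in> sphere 0 1" using False by simp
    then have "?q u \<le> ?q ?w" using u by blast
    also have "\<dots> = (1 / norm v)^2 * ?q v"
      by (simp only: matrix_vector_mult_scaleR inner_scaleR_left inner_scaleR_right power2_eq_square mult.assoc)
    finally show ?thesis using False by (simp add: dot_square_norm field_simps)
  qed simp
  have "S *v u = ?q u *\<^sub>R u"
    by (rule symmetric_quadratic_form_minimizer_eigenvector[OF sym lb]) (simp add: uu)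
  moreover have "u \<noteq> 0" using u(1) by auto
  ultimately show ?thesis using that lb by blast
qed

lemma finite_eigenvalues_symmetric:
  fixes S :: "real^'n::finite^'n"
  assumes sym: "transpose S = S"
  shows "finite {l. \<exists>v::real^'n. v \<noteq> 0 \<and> S *v v = l *s v}"
proof -
  let ?E = "{l. \<exists>v::real^'n. v \<noteq> 0 \<and> S *v v = l *s v}"
  define ev where "ev l = (SOME v::real^'n. v \<noteq> 0 \<and> S *v v = l *s v)" for l
  have ev: "ev l \<noteq> 0 \<and> S *v ev l = l *\<^sub>R ev l" if "l \<in> ?E" for l
    using someI_ex[of "\<lambda>v. v \<noteq> 0 \<and> S *v v = l *s v"] that unfolding ev_def
    by (auto simp: scalar_mult_eq_scaleR)
  have orth: "ev l1 \<bullet> ev l2 = 0" if "l1 \<in> ?E" "l2 \<in> ?E" "l1 \<noteq> l2" for l1 l2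
  proof -
    have "l2 * (ev l1 \<bullet> ev l2) = ev l1 \<bullet> (S *v ev l2)" using ev[OF that(2)] by simp
    also have "\<dots> = (S *v ev l1) \<bullet> ev l2" by (rule symmetric_inner_mult[OF sym])
    also have "\<dots> = l1 * (ev l1 \<bullet> ev l2)" using ev[OF that(1)] by simp
    finally show ?thesis using that(3) by simp
  qed
  then have "inj_on ev ?E"
    by (metis (no_types, lifting) ev inj_onI inner_eq_zero_iff)
  moreover have "pairwise orthogonal (ev ` ?E)"
    unfolding pairwise_def orthogonal_def using orth by auto
  then have "finite (ev ` ?E)" by (rule pairwise_orthogonal_imp_finite)
  ultimately show ?thesis using finite_imageD by blast
qed

lemma lambda_min_le_eigenvalue:
  fixes S :: "real^'n::finite^'n"
  assumes "transpose S = S" "v \<noteq> 0" "S *v v = l *\<^sub>R v"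
  shows "lambda_min S \<le> l"
  unfolding lambda_min_def
  by (rule Min_le[OF finite_eigenvalues_symmetric[OF assms(1)]]) (use assms(2,3) in \<open>auto simp: scalar_mult_eq_scaleR\<close>)

lemma lambda_min_quadratic_form_le:
  fixes S :: "real^'n::finite^'n"
  assumes sym: "transpose S = S"
  shows "lambda_min S * (v \<bullet> v) \<le> v \<bullet> (S *v v)"
proof -
  obtain u \<mu> where u: "u \<noteq> 0" "S *v u = \<mu> *\<^sub>R u" and lb: "\<mu> * (v \<bullet> v) \<le> v \<bullet> (S *v v)"
    using symmetric_min_eigenpair[OF sym] by metis
  have "lambda_min S * (v \<bullet> v) \<le> \<mu> * (v \<bullet> v)"
    using lambda_min_le_eigenvalue[OF sym u] by (simp add: mult_right_mono)
  with lb show ?thesis by linarith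
qed

lemma lambda_min_le_one:
  fixes W :: "real^'n::finite^'n"
  assumes ds: "doubly_stochastic_sym W"
  shows "lambda_min W \<le> 1"
  by (rule lambda_min_le_eigenvalue[OF doubly_stochastic_sym_transpose[OF ds], of "\<chi> i. 1"])
    (simp_all add: vec_eq_iff doubly_stochastic_sym_mult_const[OF ds])


lemma symmetric_quadratic_expand:
  fixes S :: "real^'n::finite^'n"
  assumes sym: "transpose S = S"
  shows "(x + t *\<^sub>R d) \<bullet> ((x + t *\<^sub>R d) - S *v (x + t *\<^sub>R d))
    = x \<bullet> (x - S *v x) + 2 * t * (d \<bullet> (x - S *v x)) + t^2 * (d \<bullet> (d - S *v d))"
proof -
  have "x \<bullet> (S *v d) = d \<bullet> (S *v x)"
    using symmetric_inner_mult[OF sym, of x d] by (simp add: inner_commute)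
  moreover have "(x + t *\<^sub>R d) - S *v (x + t *\<^sub>R d) = (x - S *v x) + t *\<^sub>R (d - S *v d)"
    by (simp add: matrix_vector_right_distrib matrix_vector_mult_scaleR algebra_simps)
  ultimately show ?thesis
    by (simp add: inner_add_left inner_add_right inner_diff_left inner_diff_right inner_commute
        power2_eq_square algebra_simps)
qed

lemma sepsum_convex:
  assumes "\<And>i. convex_on UNIV (g i)"
  shows "convex_on UNIV (sepsum g :: real^'n::finite \<Rightarrow> real)"
proof (rule convex_onI)
  fix t :: real and x y :: "real^'n" assume t: "0 < t" "t < 1"
  have "sepsum g ((1 - t) *\<^sub>R x + t *\<^sub>R y) = (\<Sum>i\<in>UNIV. g i ((1 - t) *\<^sub>R (x $ i) + t *\<^sub>R (y $ i)))"
    by (simp add: sepsum_def)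
  also have "\<dots> \<le> (\<Sum>i\<in>UNIV. (1 - t) * g i (x $ i) + t * g i (y $ i))"
    using assms t by (intro sum_mono convex_onD) auto
  also have "\<dots> = (1 - t) * sepsum g x + t * sepsum g y"
    by (simp add: sepsum_def sum.distrib sum_distrib_left)
  finally show "sepsum g ((1 - t) *\<^sub>R x + t *\<^sub>R y) \<le> (1 - t) * sepsum g x + t * sepsum g y" .
qed simp

lemma sepsum_descent:
  assumes "\<And>i. smooth_fun (L i) (f i)"
  shows "sepsum f (x + t *\<^sub>R d)
    \<le> sepsum f x + t * (grad f x \<bullet> d) + t^2 * (\<Sum>i\<in>UNIV. L i * (d $ i)^2)"
proof -
  have "sepsum f (x + t *\<^sub>R d) = (\<Sum>i\<in>UNIV. f i (x $ i + t * d $ i))" by (simp add: sepsum_def)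
  also have "\<dots> \<le> (\<Sum>i\<in>UNIV. f i (x $ i) + deriv (f i) (x $ i) * (t * d $ i) + L i * (t * d $ i)^2)"
    by (intro sum_mono smooth_fun_descent assms)
  also have "\<dots> = sepsum f x + t * (grad f x \<bullet> d) + t^2 * (\<Sum>i\<in>UNIV. L i * (d $ i)^2)"
    by (simp add: sepsum_def grad_def inner_vec_def sum.distrib sum_distrib_left power_mult_distrib
        algebra_simps)
  finally show ?thesis .
qed

subsection \<open>The decentralized proximal gradient method\<close>

locale dpgm =
  fixes W :: "real^'n::finite^'n"
    and f g :: "'n \<Rightarrow> real \<Rightarrow> real"
    and Lfi mfi :: "'n \<Rightarrow> real"
    and Lg alpha xstar :: real
    and xt :: "real^'n"
  assumes W_ds: "doubly_stochastic_sym W"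
    and f_smooth: "\<And>i. smooth_fun (Lfi i) (f i)"
    and f_strongly_convex: "\<And>i. strongly_convex_fun (mfi i) (f i)"
    and g_convex: "\<And>i. convex_on UNIV (g i)"
    and Lg_nonneg: "0 \<le> Lg"
    and g_lipschitz: "\<And>u v. \<bar>sepsum g u - sepsum g v\<bar> \<le> Lg * norm (u - v)"
    and xstar_min: "\<And>y. (\<Sum>i\<in>UNIV. f i xstar + g i xstar) \<le> (\<Sum>i\<in>UNIV. f i y + g i y)"
    and xt_min: "\<And>z. (1/2) * (xt \<bullet> (xt - W *v xt)) + alpha * sepsum f xt + alpha * sepsum g xt
                   \<le> (1/2) * (z \<bullet> (z - W *v z)) + alpha * sepsum f z + alpha * sepsum g z"
    and alpha_pos: "0 < alpha"
    and alpha_lt_spectral: "alpha < (1 + lambda_min W) / Max (range Lfi)"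
    and alpha_lt_condition: "alpha < 2 / (Max (range Lfi) + Min (range mfi))"
begin

sublocale prox_g: convex_lipschitz_prox "sepsum g" Lg alpha
  by unfold_locales (use sepsum_convex[OF g_convex] g_lipschitz Lg_nonneg alpha_pos in auto)

definition Lf :: real where "Lf = Max (range Lfi)"
definition mf :: real where "mf = Min (range mfi)"
definition c :: real where "c = sqrt (1 - 2 * alpha * mf * Lf / (mf + Lf))"
definition zeta :: real where "zeta = max \<bar>1 - (1 - lambda_min W + alpha * Lf)\<bar> \<bar>1 - alpha * mf\<bar>"

lemma Lfi_le_Lf: "Lfi i \<le> Lf"
  unfolding Lf_def by (rule Max_ge) auto

lemma deriv_quotient_bounds:
  assumes "a \<noteq> b"
  shows "mf \<le> (deriv (f i) a - deriv (f i) b) / (a - b)" "(deriv (f i) a - deriv (f i) b) / (a - b) \<le> Lf"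
proof -
  have "mf \<le> mfi i" unfolding mf_def by (rule Min_le) auto
  then show "mf \<le> (deriv (f i) a - deriv (f i) b) / (a - b)"
    using deriv_difference_quotient_bounds(1)[OF f_smooth[of i] f_strongly_convex[of i] assms] by linarith
  from Lfi_le_Lf[of i] show "(deriv (f i) a - deriv (f i) b) / (a - b) \<le> Lf"
    using deriv_difference_quotient_bounds(2)[OF f_smooth[of i] f_strongly_convex[of i] assms] by linarith
qed

lemma mf_pos: "0 < mf"
proof -
  have "mf \<in> range mfi" unfolding mf_def by (rule Min_in) auto
  then show ?thesis using f_strongly_convex by (auto simp: strongly_convex_fun_def)
qed

lemma mf_le_Lf: "mf \<le> Lf"
  using deriv_quotient_bounds[of "1::real" 0 undefined] by (auto intro: order_trans)

lemma Lf_pos: "0 < Lf"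
  using mf_pos mf_le_Lf by linarith

lemma alpha_lt: "alpha < 2 / (Lf + mf)" "alpha < (1 + lambda_min W) / Lf"
  using alpha_lt_condition alpha_lt_spectral by (simp_all add: Lf_def mf_def)

lemma c_bounds: "0 < c" "c < 1"
proof -
  have s: "0 < mf + Lf" using mf_pos mf_le_Lf by linarith
  have "alpha * (2 * mf * Lf) < (2 / (Lf + mf)) * (2 * mf * Lf)"
    using alpha_lt mf_pos Lf_pos by (intro mult_strict_right_mono) auto
  also have "\<dots> \<le> (mf + Lf)"
    using s sum_squares_bound[of mf Lf] by (simp add: field_simps power2_eq_square)
  finally show "0 < c" "c < 1"
    using s alpha_pos mf_pos Lf_pos by (auto simp: c_def field_simps)
qed

lemma gradient_factor_le_c: "mf \<le> s \<Longrightarrow> s \<le> Lf \<Longrightarrow> \<bar>1 - alpha * s\<bar> \<le> c"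
  unfolding c_def
  by (metis real_sqrt_abs real_sqrt_le_mono gradient_step_factor_sq_le mf_pos alpha_pos
      alpha_lt(1) add.commute)

lemma zeta_bounds: "0 < zeta" "zeta < 1"
proof -
  have "alpha * mf < (2 / (Lf + mf)) * mf"
    using alpha_lt mf_pos by (intro mult_strict_right_mono) auto
  also have "\<dots> \<le> 1" using mf_pos mf_le_Lf by (simp add: field_simps)
  finally have "0 < \<bar>1 - alpha * mf\<bar>" "\<bar>1 - alpha * mf\<bar> < 1" using alpha_pos mf_pos by auto
  moreover have "alpha * Lf < 1 + lambda_min W"
    using alpha_lt Lf_pos by (simp add: field_simps)
  moreover have "0 < alpha * Lf" using alpha_pos Lf_pos by simp
  ultimately show "0 < zeta" "zeta < 1"
    using lambda_min_le_one[OF W_ds] by (auto simp: zeta_def)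
qed

lemma abs_sum_deriv_at_xstar_le: "\<bar>\<Sum>i\<in>UNIV. deriv (f i) xstar\<bar> \<le> Lg * sqrt (real CARD('n))"
proof -
  define \<sigma> where "\<sigma> = (\<Sum>i\<in>UNIV. deriv (f i) xstar)"
  define L where "L = (\<Sum>i\<in>UNIV. Lfi i)"
  define K where "K = Lg * sqrt (real CARD('n))"
  \<comment> \<open>moving all coordinates of \<open>x\<^sup>*\<close> by \<open>h\<close>: descent lemma for \<open>f\<close>, Lipschitz bound for \<open>g\<close>\<close>
  have key: "0 \<le> \<sigma> * h + L * h^2 + K * \<bar>h\<bar>" for h
  proof -
    have "(\<Sum>i\<in>UNIV. f i (xstar + h)) \<le> (\<Sum>i\<in>UNIV. f i xstar + deriv (f i) xstar * h + Lfi i * h^2)"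
      by (intro sum_mono smooth_fun_descent f_smooth)
    also have "\<dots> = (\<Sum>i\<in>UNIV. f i xstar) + \<sigma> * h + L * h^2"
      by (simp add: \<sigma>_def L_def sum.distrib sum_distrib_right)
    finally have fd: "(\<Sum>i\<in>UNIV. f i (xstar + h)) \<le> (\<Sum>i\<in>UNIV. f i xstar) + \<sigma> * h + L * h^2" .
    have "(\<chi> i. xstar + h) - (\<chi> i. xstar) = (\<chi> i. h :: real^'n)" by (simp add: vec_eq_iff)
    then have "sepsum g (\<chi> i. xstar + h) - sepsum g (\<chi> i. xstar) \<le> K * \<bar>h\<bar>"
      using g_lipschitz[of "\<chi> i. xstar + h" "\<chi> i. xstar"] norm_const_vec[where 'n='n, of h]
      by (simp add: K_def mult.assoc)
    then have "(\<Sum>i\<in>UNIV. g i (xstar + h)) - (\<Sum>i\<in>UNIV. g i xstar) \<le> K * \<bar>h\<bar>"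
      by (simp add: sepsum_def)
    then show ?thesis using xstar_min[of "xstar + h"] fd by (simp add: sum.distrib)
  qed
  have "0 \<le> K + s * \<sigma>" if "s = 1 \<or> s = -1" for s
  proof (rule nonneg_if_nonneg_add_small_multiple)
    fix t :: real assume t: "0 < t" "t \<le> 1"
    have "0 \<le> \<sigma> * (s * t) + L * (s * t)^2 + K * \<bar>s * t\<bar>" by (rule key)
    also have "\<dots> = t * ((K + s * \<sigma>) + t * L)"
      using that t by (auto simp: power2_eq_square algebra_simps)
    finally show "0 \<le> K + s * \<sigma> + t * L" using t by (simp add: zero_le_mult_iff)
  qed
  from this[of 1] this[of "-1"] show ?thesis unfolding \<sigma>_def K_def by linarith
qed

definition yt :: "real^'n" where "yt = W *v xt - alpha *\<^sub>R grad f xt"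

lemma xt_optimality: "sepsum g xt + ((yt - xt) \<bullet> (z - xt)) / alpha \<le> sepsum g z"
proof -
  define d where "d = z - xt"
  define a where "a = d \<bullet> (xt - W *v xt) + alpha * (grad f xt \<bullet> d) + alpha * (sepsum g z - sepsum g xt)"
  define b where "b = (1/2) * (d \<bullet> (d - W *v d)) + alpha * (\<Sum>i\<in>UNIV. Lfi i * (d $ i)^2)"
  have "0 \<le> a + t * b" if t: "0 < t" "t \<le> 1" for t
  proof -
    have "alpha * sepsum f (xt + t *\<^sub>R d)
        \<le> alpha * (sepsum f xt + t * (grad f xt \<bullet> d) + t^2 * (\<Sum>i\<in>UNIV. Lfi i * (d $ i)^2))"
      using sepsum_descent[OF f_smooth] alpha_pos by (intro mult_left_mono) auto
    moreover have "xt + t *\<^sub>R d = (1 - t) *\<^sub>R xt + t *\<^sub>R z" by (simp add: d_def algebra_simps)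
    then have "alpha * sepsum g (xt + t *\<^sub>R d) \<le> alpha * ((1 - t) * sepsum g xt + t * sepsum g z)"
      using convex_onD[OF sepsum_convex[OF g_convex], of t xt z] t alpha_pos
      by (intro mult_left_mono) auto
    ultimately have "0 \<le> t * (d \<bullet> (xt - W *v xt)) + t^2 * ((1/2) * (d \<bullet> (d - W *v d)))
          + alpha * (t * (grad f xt \<bullet> d) + t^2 * (\<Sum>i\<in>UNIV. Lfi i * (d $ i)^2))
          + alpha * (t * (sepsum g z - sepsum g xt))"
      using xt_min[of "xt + t *\<^sub>R d"]
      unfolding symmetric_quadratic_expand[OF doubly_stochastic_sym_transpose[OF W_ds]]
      by (simp add: algebra_simps)
    also have "\<dots> = t * (a + t * b)" by (simp add: a_def b_def power2_eq_square algebra_simps)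
    finally show ?thesis using t by (simp add: zero_le_mult_iff)
  qed
  then have "0 \<le> a" by (rule nonneg_if_nonneg_add_small_multiple)
  moreover have "(yt - xt) \<bullet> (z - xt) = - (d \<bullet> (xt - W *v xt) + alpha * (grad f xt \<bullet> d))"
    by (simp add: yt_def d_def inner_diff_left inner_diff_right inner_commute algebra_simps)
  ultimately have "(yt - xt) \<bullet> (z - xt) \<le> alpha * (sepsum g z - sepsum g xt)"
    unfolding a_def by linarith
  then show ?thesis using alpha_pos by (simp add: field_simps)
qed

lemma prox_yt: "prox alpha (sepsum g) yt = xt"
  using prox_g.prox_eqI xt_optimality by blast

lemma norm_fixed_point_residual_le: "norm (xt - W *v xt + alpha *\<^sub>R grad f xt) \<le> alpha * Lg"
proof -
  have "prox alpha (sepsum g) yt - yt = xt - W *v xt + alpha *\<^sub>R grad f xt"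
    unfolding prox_yt by (simp add: yt_def algebra_simps)
  then show ?thesis using prox_g.prox_dist_le[of yt] by simp
qed

lemma grad_lipschitz: "norm (grad f x - grad f z) \<le> Lf * norm (x - z)"
proof (rule norm_le_if_componentwise_le)
  fix i
  have "\<bar>deriv (f i) (x $ i) - deriv (f i) (z $ i)\<bar> \<le> Lfi i * \<bar>x $ i - z $ i\<bar>"
    by (rule smooth_fun_deriv_lipschitz[OF f_smooth])
  also have "\<dots> \<le> Lf * \<bar>x $ i - z $ i\<bar>" using Lfi_le_Lf[of i] by (intro mult_right_mono) auto
  finally show "\<bar>(grad f x - grad f z) $ i\<bar> \<le> Lf * \<bar>(x - z) $ i\<bar>" by (simp add: grad_def)
qed (use Lf_pos in simp)

lemma grad_diff_eq_diagonal:
  obtains D where "\<And>i. mf \<le> D i" "\<And>i. D i \<le> Lf" "grad f x - grad f z = (\<chi> i. D i * (x - z) $ i)"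
proof
  define D where "D i = (if x $ i = z $ i then mf
    else (deriv (f i) (x $ i) - deriv (f i) (z $ i)) / (x $ i - z $ i))" for i
  show "mf \<le> D i" "D i \<le> Lf" for i
    using deriv_quotient_bounds[of "x $ i" "z $ i" i] mf_le_Lf by (auto simp: D_def)
  show "grad f x - grad f z = (\<chi> i. D i * (x - z) $ i)"
    by (simp add: vec_eq_iff D_def grad_def)
qed

lemma consensus_gradient_step_contraction:
  fixes a b :: real
  shows "norm ((\<chi> i. a) - (\<chi> i. b) - alpha *\<^sub>R avg (grad f (\<chi> i. a) - grad f (\<chi> i. b)))
    \<le> c * norm ((\<chi> i. a) - (\<chi> i. b) :: real^'n)"
proof -
  obtain D where D: "\<And>i. mf \<le> D i" "\<And>i. D i \<le> Lf"
    and eq: "grad f (\<chi> i. a) - grad f (\<chi> i. b) = (\<chi> i. D i * ((\<chi> i. a) - (\<chi> i. b) :: real^'n) $ i)"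
    using grad_diff_eq_diagonal[where x = "\<chi> i. a" and z = "\<chi> i. b"] by blast
  define s where "s = (\<Sum>i\<in>UNIV. D i) / real CARD('n)"
  have "(\<Sum>i\<in>(UNIV::'n set). mf) \<le> (\<Sum>i\<in>UNIV. D i)" "(\<Sum>i\<in>UNIV. D i) \<le> (\<Sum>i\<in>(UNIV::'n set). Lf)"
    using sum_mono[of UNIV "\<lambda>_. mf" D] sum_mono[of UNIV D "\<lambda>_. Lf"] D by auto
  then have "mf \<le> s" "s \<le> Lf" by (simp_all add: s_def field_simps)
  moreover have "(\<chi> i. a) - (\<chi> i. b) - alpha *\<^sub>R avg (grad f (\<chi> i. a) - grad f (\<chi> i. b))
      = (1 - alpha * s) *\<^sub>R ((\<chi> i. a) - (\<chi> i. b) :: real^'n)"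
    unfolding eq
    by (simp add: vec_eq_iff avg_def s_def sum_subtractf sum_distrib_left[symmetric] diff_divide_distrib
        algebra_simps)
  ultimately show ?thesis
    using gradient_factor_le_c by (simp add: mult_right_mono)
qed

lemma doubly_stochastic_minus_diagonal_norm_le:
  assumes D: "\<And>i. mf \<le> D i" "\<And>i. D i \<le> Lf"
  shows "norm (W *v v - alpha *\<^sub>R (\<chi> i. D i * v $ i)) \<le> zeta * norm v"
proof -
  define S :: "real^'n^'n" where "S = (\<chi> i j. W $ i $ j - (if i = j then alpha * D i else 0))"
  have Sv: "S *v w = W *v w - alpha *\<^sub>R (\<chi> i. D i * w $ i)" for w
    by (simp add: vec_eq_iff S_def matrix_vector_mult_def left_diff_distrib sum_subtractf
        if_distrib[of "\<lambda>x. x * _"] cong: if_cong)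
  have "transpose S = S"
    using doubly_stochastic_sym_transpose[OF W_ds]
    by (simp add: S_def transpose_def vec_eq_iff)
  moreover have "\<bar>w \<bullet> (S *v w)\<bar> \<le> zeta * (w \<bullet> w)" for w
  proof -
    have vv: "w \<bullet> w = (\<Sum>i\<in>UNIV. (w $ i)^2)" by (simp add: inner_vec_def power2_eq_square)
    have "w \<bullet> (\<chi> i. D i * w $ i) = (\<Sum>i\<in>UNIV. D i * (w $ i)^2)"
      by (simp add: inner_vec_def power2_eq_square algebra_simps)
    then have q: "w \<bullet> (S *v w) = w \<bullet> (W *v w) - alpha * (\<Sum>i\<in>UNIV. D i * (w $ i)^2)"
      by (simp add: Sv inner_diff_right)
    have "mf * (w \<bullet> w) \<le> (\<Sum>i\<in>UNIV. D i * (w $ i)^2)" "(\<Sum>i\<in>UNIV. D i * (w $ i)^2) \<le> Lf * (w \<bullet> w)"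
      unfolding vv sum_distrib_left by (simp_all add: D mult_right_mono sum_mono)
    then have "alpha * (mf * (w \<bullet> w)) \<le> alpha * (\<Sum>i\<in>UNIV. D i * (w $ i)^2)"
        "alpha * (\<Sum>i\<in>UNIV. D i * (w $ i)^2) \<le> alpha * (Lf * (w \<bullet> w))"
      using alpha_pos by (simp_all add: mult_left_mono)
    then have "(lambda_min W - alpha * Lf) * (w \<bullet> w) \<le> w \<bullet> (S *v w)"
        "w \<bullet> (S *v w) \<le> (1 - alpha * mf) * (w \<bullet> w)"
      using q lambda_min_quadratic_form_le[OF doubly_stochastic_sym_transpose[OF W_ds], of w]
        doubly_stochastic_sym_quadratic_form_le[OF W_ds, of w]
      by (simp_all add: left_diff_distrib)
    moreover have "- zeta * (w \<bullet> w) \<le> (lambda_min W - alpha * Lf) * (w \<bullet> w)"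
        "(1 - alpha * mf) * (w \<bullet> w) \<le> zeta * (w \<bullet> w)"
      by (intro mult_right_mono; simp add: zeta_def)+
    ultimately show ?thesis by linarith
  qed
  ultimately have "norm (S *v v) \<le> zeta * norm v"
    by (rule symmetric_norm_mult_le_if_quadratic_form_le)
  then show ?thesis by (simp add: Sv)
qed

definition dpgm_step :: "real^'n \<Rightarrow> real^'n" where
  "dpgm_step x = prox alpha (sepsum g) (W *v x - alpha *\<^sub>R grad f x)"

lemma mean_error_step:
  "norm (avg (dpgm_step x + e) - (\<chi> i. xstar))
    \<le> c * norm (avg x - (\<chi> i. xstar)) + alpha * Lf * norm (x - avg x) + 2 * alpha * Lg + norm e"
proof -
  define y where "y = W *v x - alpha *\<^sub>R grad f x"
  define xs :: "real^'n" where "xs = (\<chi> i. xstar)"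
  let ?p = "prox alpha (sepsum g) y"
  define T where "T = avg x - xs - alpha *\<^sub>R avg (grad f (avg x) - grad f xs)"
  have dec: "avg (dpgm_step x + e) - xs = avg (?p - y) + T + (- alpha) *\<^sub>R avg (grad f x - grad f (avg x))
      + (- alpha) *\<^sub>R avg (grad f xs) + avg e"
    by (simp add: dpgm_step_def y_def T_def avg_add avg_diff avg_scaleR
        avg_doubly_stochastic_sym_mult[OF W_ds] algebra_simps)
  moreover have "norm (avg (?p - y)) \<le> alpha * Lg"
    using norm_avg_le[of "?p - y"] prox_g.prox_dist_le[of y] by linarith
  moreover have "norm T \<le> c * norm (avg x - xs)"
    unfolding T_def xs_def avg_def[of x] by (rule consensus_gradient_step_contraction)
  moreover have "norm ((- alpha) *\<^sub>R avg (grad f x - grad f (avg x))) \<le> alpha * Lf * norm (x - avg x)"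
    using norm_avg_le[of "grad f x - grad f (avg x)"] grad_lipschitz[of x "avg x"] alpha_pos
    by (simp add: mult_left_mono mult.assoc)
  moreover have "norm ((- alpha) *\<^sub>R avg (grad f xs)) \<le> alpha * Lg"
  proof -
    have "avg (grad f xs) = (\<chi> i. (\<Sum>j\<in>UNIV. deriv (f j) xstar) / real CARD('n))"
      by (simp add: grad_def avg_def xs_def)
    then have "norm (avg (grad f xs)) = sqrt (real CARD('n)) * \<bar>\<Sum>j\<in>UNIV. deriv (f j) xstar\<bar> / real CARD('n)"
      by (simp add: norm_const_vec)
    also have "\<dots> \<le> sqrt (real CARD('n)) * (Lg * sqrt (real CARD('n))) / real CARD('n)"
      using abs_sum_deriv_at_xstar_le by (intro divide_right_mono mult_left_mono) auto
    also have "\<dots> = Lg" by (simp add: field_simps)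
    finally show ?thesis using alpha_pos by (simp add: mult_left_mono)
  qed
  moreover have "norm (avg e) \<le> norm e" by (rule norm_avg_le)
  moreover have "norm (avg (dpgm_step x + e) - xs) \<le> norm (avg (?p - y)) + norm T
      + norm ((- alpha) *\<^sub>R avg (grad f x - grad f (avg x))) + norm ((- alpha) *\<^sub>R avg (grad f xs))
      + norm (avg e)"
    unfolding dec by (rule norm_triangle_ineq5)
  ultimately show ?thesis unfolding xs_def by linarith
qed

lemma disagreement_step:
  "norm ((dpgm_step x + e) - avg (dpgm_step x + e))
    \<le> rho W * norm (x - avg x) + alpha * Lf * norm (x - xt) + (2 * alpha * Lg + norm (xt - W *v xt)) + norm e"
proof -
  define y where "y = W *v x - alpha *\<^sub>R grad f x"
  define w where "w = alpha *\<^sub>R grad f x"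
  let ?p = "prox alpha (sepsum g) y"
  have "y - avg y = (W - Jmat) *v (x - avg x) - (w - avg w)"
    by (simp add: y_def w_def avg_diff avg_doubly_stochastic_sym_mult[OF W_ds]
        doubly_stochastic_sym_mult_disagreement[OF W_ds])
  then have dec: "(dpgm_step x + e) - avg (dpgm_step x + e)
      = ((?p - y) - avg (?p - y)) + (W - Jmat) *v (x - avg x) - (w - avg w) + (e - avg e)"
    by (simp add: dpgm_step_def avg_add avg_diff flip: y_def) (simp add: algebra_simps)
  moreover have "norm ((?p - y) - avg (?p - y)) \<le> alpha * Lg"
    using norm_diff_avg_le[of "?p - y"] prox_g.prox_dist_le[of y] by linarith
  moreover have "norm ((W - Jmat) *v (x - avg x)) \<le> rho W * norm (x - avg x)"
    by (rule rho_norm_bound)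
  moreover have "norm (w - avg w) \<le> alpha * Lf * norm (x - xt) + (alpha * Lg + norm (xt - W *v xt))"
  proof -
    have weq: "w = alpha *\<^sub>R (grad f x - grad f xt) + (xt - W *v xt + alpha *\<^sub>R grad f xt) - (xt - W *v xt)"
      by (simp add: w_def algebra_simps)
    have "norm w \<le> norm (alpha *\<^sub>R (grad f x - grad f xt)) + norm (xt - W *v xt + alpha *\<^sub>R grad f xt)
        + norm (xt - W *v xt)"
      unfolding weq
      using norm_triangle_ineq4[of "alpha *\<^sub>R (grad f x - grad f xt) + (xt - W *v xt + alpha *\<^sub>R grad f xt)"
          "xt - W *v xt"]
        norm_triangle_ineq[of "alpha *\<^sub>R (grad f x - grad f xt)" "xt - W *v xt + alpha *\<^sub>R grad f xt"]
      by linarith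
    then have "norm w \<le> alpha * norm (grad f x - grad f xt) + norm (xt - W *v xt + alpha *\<^sub>R grad f xt)
        + norm (xt - W *v xt)"
      using alpha_pos by simp
    moreover have "alpha * norm (grad f x - grad f xt) \<le> alpha * Lf * norm (x - xt)"
      using grad_lipschitz[of x xt] alpha_pos by (simp add: mult_left_mono mult.assoc)
    ultimately show ?thesis
      using norm_diff_avg_le[of w] norm_fixed_point_residual_le by linarith
  qed
  moreover have "norm (e - avg e) \<le> norm e" by (rule norm_diff_avg_le)
  moreover have "norm ((dpgm_step x + e) - avg (dpgm_step x + e)) \<le> norm ((?p - y) - avg (?p - y))
      + norm ((W - Jmat) *v (x - avg x)) + norm (w - avg w) + norm (e - avg e)"
    unfolding dec
    using norm_triangle_ineq[of "(?p - y) - avg (?p - y) + (W - Jmat) *v (x - avg x) - (w - avg w)" "e - avg e"]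
      norm_triangle_ineq4[of "(?p - y) - avg (?p - y) + (W - Jmat) *v (x - avg x)" "w - avg w"]
      norm_triangle_ineq[of "(?p - y) - avg (?p - y)" "(W - Jmat) *v (x - avg x)"]
    by linarith
  ultimately show ?thesis by linarith
qed

lemma penalized_error_step: "norm ((dpgm_step x + e) - xt) \<le> zeta * norm (x - xt) + norm e"
proof -
  obtain D where D: "\<And>i. mf \<le> D i" "\<And>i. D i \<le> Lf"
    and eq: "grad f x - grad f xt = (\<chi> i. D i * (x - xt) $ i)"
    using grad_diff_eq_diagonal[where x = x and z = xt] by blast
  have "dpgm_step x - xt = prox alpha (sepsum g) (W *v x - alpha *\<^sub>R grad f x) - prox alpha (sepsum g) yt"
    by (simp add: dpgm_step_def prox_yt)
  then have "norm (dpgm_step x - xt) \<le> norm ((W *v x - alpha *\<^sub>R grad f x) - yt)"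
    using prox_g.prox_nonexpansive by simp
  also have "(W *v x - alpha *\<^sub>R grad f x) - yt = W *v (x - xt) - alpha *\<^sub>R (grad f x - grad f xt)"
    by (simp add: yt_def matrix_vector_mult_diff_distrib scaleR_diff_right)
  also have "norm \<dots> \<le> zeta * norm (x - xt)"
    unfolding eq by (rule doubly_stochastic_minus_diagonal_norm_le[OF D])
  finally have "norm (dpgm_step x - xt) \<le> zeta * norm (x - xt)" .
  moreover have "norm ((dpgm_step x + e) - xt) \<le> norm (dpgm_step x - xt) + norm e"
    using norm_triangle_ineq[of "dpgm_step x - xt" e] by (simp add: algebra_simps)
  ultimately show ?thesis by linarith
qed

definition error_vec :: "real^'n \<Rightarrow> real^3" where
  "error_vec x = vector [norm (avg x - (\<chi> i. xstar)), norm (x - avg x), norm (x - xt)]"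

definition error_matrix :: "real^3^3" where
  "error_matrix = vector [vector [c, alpha * Lf, 0], vector [0, rho W, alpha * Lf], vector [0, 0, zeta]]"

definition error_offset :: "real^3" where
  "error_offset = vector [2 * alpha * Lg, 2 * alpha * Lg + norm (xt - W *v xt), 0]"

lemma error_vec_step:
  "error_vec (dpgm_step x + e) \<le> error_matrix *v error_vec x + error_offset + norm e *\<^sub>R 1"
  using mean_error_step[of x e] disagreement_step[of x e] penalized_error_step[of x e]
  by (simp add: less_eq_vec_def forall_3 error_vec_def error_matrix_def error_offset_def
      matrix_vector_mult_def sum_3 algebra_simps)

end

lemma (in prob_space) integral_vec_le_affine:
  fixes D :: "'a \<Rightarrow> real^'m::finite" and D' :: "'a \<Rightarrow> real^'k::finite" and A :: "real^'m^'k"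
  assumes "\<And>j. integrable M (\<lambda>\<omega>. D \<omega> $ j)" "\<And>k. integrable M (\<lambda>\<omega>. D' \<omega> $ k)" "integrable M E"
    and "\<And>\<omega>. D' \<omega> \<le> A *v D \<omega> + b + E \<omega> *\<^sub>R 1"
  shows "(\<chi> k. \<integral>\<omega>. D' \<omega> $ k \<partial>M) \<le> A *v (\<chi> j. \<integral>\<omega>. D \<omega> $ j \<partial>M) + b + (\<integral>\<omega>. E \<omega> \<partial>M) *\<^sub>R 1"
  unfolding less_eq_vec_def
proof
  fix k
  have "(\<integral>\<omega>. D' \<omega> $ k \<partial>M) \<le> (\<integral>\<omega>. (\<Sum>j\<in>UNIV. A $ k $ j * D \<omega> $ j) + b $ k + E \<omega> \<partial>M)"
    using assms by (intro integral_mono) (auto simp: less_eq_vec_def matrix_vector_mult_def)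
  also have "\<dots> = (\<Sum>j\<in>UNIV. A $ k $ j * (\<integral>\<omega>. D \<omega> $ j \<partial>M)) + b $ k + (\<integral>\<omega>. E \<omega> \<partial>M)"
    using assms(1,3) by (simp add: integral_add integral_sum prob_space)
  finally show "(\<chi> k. \<integral>\<omega>. D' \<omega> $ k \<partial>M) $ k
      \<le> (A *v (\<chi> j. \<integral>\<omega>. D \<omega> $ j \<partial>M) + b + (\<integral>\<omega>. E \<omega> \<partial>M) *\<^sub>R 1) $ k"
    by (simp add: matrix_vector_mult_def)
qed

lemma integral_mono_add:
  fixes f g h :: "'a \<Rightarrow> real"
  assumes "integrable M f" "integrable M g" "integrable M h" "\<And>\<omega>. f \<omega> \<le> g \<omega> + h \<omega>"
  shows "(\<integral>\<omega>. f \<omega> \<partial>M) \<le> (\<integral>\<omega>. g \<omega> \<partial>M) + (\<integral>\<omega>. h \<omega> \<partial>M)"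
  using integral_mono[of M f "\<lambda>\<omega>. g \<omega> + h \<omega>"] assms by simp

theorem proposition1:
  fixes E :: "'n::finite \<Rightarrow> 'n \<Rightarrow> bool"
    and W :: "real^'n^'n"
    and f g :: "'n \<Rightarrow> real \<Rightarrow> real"
    and Lfi mfi :: "'n \<Rightarrow> real"
    and Lg alpha eta xstar :: real
    and xt :: "real^'n"
    and M :: "'a measure"
    and x e :: "nat \<Rightarrow> 'a \<Rightarrow> real^'n"
  defines "xs \<equiv> (\<chi> i. xstar) :: real^'n"
    and "c \<equiv> sqrt (1 - 2 * alpha * Min (range mfi) * Max (range Lfi) / (Min (range mfi) + Max (range Lfi)))"
    and "zeta \<equiv> max \<bar>1 - (1 - lambda_min W + alpha * Max (range Lfi))\<bar> \<bar>1 - alpha * Min (range mfi)\<bar>"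
    and "A \<equiv> vector [vector [sqrt (1 - 2 * alpha * Min (range mfi) * Max (range Lfi) / (Min (range mfi) + Max (range Lfi))), alpha * Max (range Lfi), 0],
                     vector [0, rho W, alpha * Max (range Lfi)],
                     vector [0, 0, max \<bar>1 - (1 - lambda_min W + alpha * Max (range Lfi))\<bar> \<bar>1 - alpha * Min (range mfi)\<bar>]] :: real^3^3"
    and "b \<equiv> vector [2 * alpha * Lg, 2 * alpha * Lg + norm (xt - W *v xt), 0] :: real^3"
    and "d \<equiv> (\<lambda>l \<omega>. vector [norm (avg (x l \<omega>) - (\<chi> i. xstar)), norm (x l \<omega> - avg (x l \<omega>)),
                              norm (x l \<omega> - xt)] :: real^3)"
  assumes N2: "CARD('n) \<ge> 2"
    and E_sym: "\<forall>i j. E i j \<longrightarrow> E j i"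
    and E_conn: "\<forall>i j. E\<^sup>*\<^sup>* i j"
    and W_ds: "doubly_stochastic_sym W"
    and W_graph: "\<forall>i j. i \<noteq> j \<and> \<not> E i j \<longrightarrow> W $ i $ j = 0"
    and rho_pos: "0 < rho W" and rho_lt1: "rho W < 1"
    and f_smooth: "\<forall>i. smooth_fun (Lfi i) (f i)"
    and f_sc: "\<forall>i. strongly_convex_fun (mfi i) (f i)"
    and g_convex: "\<forall>i. convex_on UNIV (g i)"
    and g_lip: "\<forall>i. \<exists>K. \<forall>u v. \<bar>g i u - g i v\<bar> \<le> K * \<bar>u - v\<bar>"
    and Lg_nonneg: "Lg \<ge> 0"
    and Lg_lip: "\<forall>u v. \<bar>sepsum g u - sepsum g v\<bar> \<le> Lg * norm (u - v)"
    and xstar_min: "\<forall>y. (\<Sum>i\<in>UNIV. f i xstar + g i xstar) \<le> (\<Sum>i\<in>UNIV. f i y + g i y)"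
    and xt_min: "\<forall>z. (1/2) * (xt \<bullet> (xt - W *v xt)) + alpha * sepsum f xt + alpha * sepsum g xt
                   \<le> (1/2) * (z \<bullet> (z - W *v z)) + alpha * sepsum f z + alpha * sepsum g z"
    and alpha_pos: "0 < alpha"
    and alpha_lt: "alpha < min ((1 + lambda_min W) / Max (range Lfi)) (2 / (Max (range Lfi) + Min (range mfi)))"
    and M_prob: "prob_space M"
    and x0_meas: "x 0 \<in> borel_measurable M"
    and e_meas: "\<forall>l. e l \<in> borel_measurable M"
    and e_int: "\<forall>l. integrable M (\<lambda>\<omega>. norm (e l \<omega>))"
    and e_bound: "\<forall>l. (\<integral>\<omega>. norm (e l \<omega>) \<partial>M) \<le> eta"
    and iter: "\<forall>l \<omega>. x (Suc l) \<omega> =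
                 prox alpha (sepsum g) (W *v x l \<omega> - alpha *\<^sub>R grad f (x l \<omega>)) + e l \<omega>"
  shows "0 < c \<and> c < 1 \<and> 0 < rho W \<and> rho W < 1 \<and> 0 < zeta \<and> zeta < 1 \<and>
    (\<forall>l. (\<forall>k. integrable M (\<lambda>\<omega>. d l \<omega> $ k) \<and> integrable M (\<lambda>\<omega>. d (Suc l) \<omega> $ k))
          \<and> integrable M (\<lambda>\<omega>. norm (x (Suc l) \<omega> - xs)) \<longrightarrow>
       (\<chi> k. \<integral>\<omega>. d (Suc l) \<omega> $ k \<partial>M)
         \<le> A *v (\<chi> k. \<integral>\<omega>. d l \<omega> $ k \<partial>M) + b + (\<integral>\<omega>. norm (e l \<omega>) \<partial>M) *\<^sub>R (1 :: real^3)
       \<and> (\<integral>\<omega>. norm (x (Suc l) \<omega> - xs) \<partial>M)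
         \<le> (\<integral>\<omega>. d (Suc l) \<omega> $ 1 \<partial>M) + (\<integral>\<omega>. d (Suc l) \<omega> $ 2 \<partial>M))"
proof -
  interpret D: dpgm W f g Lfi mfi Lg alpha xstar xt
    by unfold_locales
      (use W_ds f_smooth f_sc g_convex Lg_nonneg Lg_lip xstar_min xt_min alpha_pos alpha_lt in auto)
  interpret prob_space M by (rule M_prob)
  have bounds: "0 < c \<and> c < 1 \<and> 0 < zeta \<and> zeta < 1"
    using D.c_bounds D.zeta_bounds
    unfolding c_def zeta_def D.c_def D.zeta_def D.mf_def D.Lf_def by simp
  have A_eq: "A = D.error_matrix"
    unfolding A_def D.error_matrix_def D.c_def D.zeta_def D.mf_def D.Lf_def ..
  have b_eq: "b = D.error_offset"
    unfolding b_def D.error_offset_def by simp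
  have d_eq: "d l \<omega> = D.error_vec (x l \<omega>)" for l \<omega>
    unfolding d_def D.error_vec_def ..
  have step: "x (Suc l) \<omega> = D.dpgm_step (x l \<omega>) + e l \<omega>" for l \<omega>
    using iter by (simp add: D.dpgm_step_def)
  have triangle: "norm (v - xs) \<le> D.error_vec v $ 1 + D.error_vec v $ 2" for v
    using norm_triangle_ineq[of "avg v - xs" "v - avg v"] by (simp add: D.error_vec_def xs_def)
  show ?thesis
    using bounds rho_pos rho_lt1 e_int
    by (auto simp: A_eq b_eq d_eq step D.error_vec_step
        intro!: integral_vec_le_affine integral_mono_add[OF _ _ _ triangle])
qed

end
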